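(* Under the standing assumptions below, let $E$ be a maximal loxodromic subgroup of $G$, let $x_0\in C_E$ and let $t\in G$ be $E$--reduced at $x_0$. Then for all $v\in E$, $$(t^{\pm1}x_0,vx_0)_{x_0}\leqslant [E]/2+1500\delta.$$
   Context: Standing assumptions: $X$ is a geodesic $\delta$--hyperbolic space (distance $|x-y|$, Gromov product $(p,q)_x=\frac12(|p-x|+|q-x|-|p-q|)$, $(p,r)_x\geqslant\min\{(p,q)_x,(q,r)_x\}-\delta$); $N_0\geqslant1$; either $\delta>0$, $\kappa_0\geqslant\delta$, $\rho_0:=\delta/N_0$, or $\delta=0$, $X$ a simplicial tree with edges of length $\rho_0$ and $\kappa_0\geqslant\rho_0$. $G$ acts by isometries, $(\kappa_0,N_0)$--acylindrically: for all $x,y$ with $|x-y|\geqslant\kappa_0$ at most $N_0$ elements $g$ satisfy $|gx-x|\leqslant100\delta$, $|gy-y|\leqslant100\delta$. $[g]:=\inf_x|gx-x|$; $g$ hyperbolic if $\lim_n\frac1n|g^nx-x|>0$. Elementary subgroup: limit set in $\partial X$ of at most two points; loxodromic: elementary and containing a hyperbolic element; a loxodromic subgroup has limit set $\{x^+,x^-\}$ and lies in a unique maximal loxodromic subgroup. $[E]:=\min\{[g]\mid g\in E,[g]>200\delta\}$. $1$--quasi-geodesics and $L$-local $1$--quasi-geodesics: subpaths (over intervals of diameter $\leqslant L$ in the local case) have length at most the distance of their endpoints plus $\delta$. $C_E$: $40\delta$--neighbourhood of the union of all bi-infinite $200\delta$-local $1$--quasi-geodesics with endpoints $x^\pm$ (the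 axis in the tree case). An element $t$ is $E$--reduced at $x_0$ if $x_0\in C_E$ and $|tx_0-x_0|=\min_{e,f\in E}|(etf)x_0-x_0|$. *)

theory Defs
  imports "HOL-Analysis.Analysis" "HOL-Algebra.Group"
begin

definition gromov :: "'x::metric_space \<Rightarrow> 'x \<Rightarrow> 'x \<Rightarrow> real" where
  "gromov x p q = (dist p x + dist q x - dist p q) / 2"

definition geodesic_space :: "'x::metric_space itself \<Rightarrow> bool" where
  "geodesic_space _ \<longleftrightarrow> (\<forall>x y::'x. \<exists>\<gamma>::real \<Rightarrow> 'x. \<gamma> 0 = x \<and> \<gamma> (dist x y) = y \<and>
     (\<forall>s\<in>{0..dist x y}. \<forall>t\<in>{0..dist x y}. dist (\<gamma> s) (\<gamma> t) = \<bar>s - t\<bar>))"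

definition hyperbolic_space :: "'x::metric_space itself \<Rightarrow> real \<Rightarrow> bool" where
  "hyperbolic_space _ \<delta> \<longleftrightarrow> \<delta> \<ge> 0 \<and>
     (\<forall>x p q r::'x. gromov x p r \<ge> min (gromov x p q) (gromov x q r) - \<delta>)"

text \<open>Metric simplicial tree with edges of length \<rho>, given by its vertex set V:
  every point lies on an edge (a segment of length \<rho> between two vertices), and all
  Gromov products of vertices are multiples of \<rho> (so distances between vertices are
  multiples of \<rho> and branching only happens at vertices).\<close>
definition simplicial_tree :: "'x::metric_space set \<Rightarrow> real \<Rightarrow> bool" where
  "simplicial_tree V \<rho> \<longleftrightarrow> \<rho> > 0 \<and> geodesic_space TYPE('x) \<and> hyperbolic_space TYPE('x) 0 \<and>
     (\<forall>u\<in>V. \<forall>v\<in>V. \<forall>w\<in>V. \<exists>n::nat. gromov u v w = real n * \<rho>) \<and>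
     (\<forall>x::'x. \<exists>v\<in>V. \<exists>w\<in>V. dist v w = \<rho> \<and> dist v x + dist x w = \<rho>)"

definition path_length :: "(real \<Rightarrow> 'x::metric_space) \<Rightarrow> real \<Rightarrow> real \<Rightarrow> ereal" where
  "path_length \<gamma> a b = (SUP ts \<in> {ts. sorted ts \<and> set ts \<subseteq> {a..b}}.
      ereal (\<Sum>i<length ts - 1. dist (\<gamma> (ts ! i)) (\<gamma> (ts ! Suc i))))"

definition arclength_param :: "(real \<Rightarrow> 'x::metric_space) \<Rightarrow> bool" where
  "arclength_param \<gamma> \<longleftrightarrow> (\<forall>a b. a \<le> b \<longrightarrow> path_length \<gamma> a b = ereal (b - a))"

definition local_quasi_geodesic :: "real \<Rightarrow> real \<Rightarrow> (real \<Rightarrow> 'x::metric_space) \<Rightarrow> bool" where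
  "local_quasi_geodesic L \<delta> \<gamma> \<longleftrightarrow> arclength_param \<gamma> \<and>
     (\<forall>a b. a \<le> b \<longrightarrow> b - a \<le> L \<longrightarrow> path_length \<gamma> a b \<le> ereal (dist (\<gamma> a) (\<gamma> b) + \<delta>))"

definition geodesic_line :: "(real \<Rightarrow> 'x::metric_space) \<Rightarrow> bool" where
  "geodesic_line \<gamma> \<longleftrightarrow> (\<forall>s t. dist (\<gamma> s) (\<gamma> t) = \<bar>s - t\<bar>)"

definition converges_at_infinity :: "(nat \<Rightarrow> 'x::metric_space) \<Rightarrow> bool" where
  "converges_at_infinity s \<longleftrightarrow>
     (\<forall>b M. \<exists>N. \<forall>m\<ge>N. \<forall>n\<ge>N. gromov b (s m) (s n) \<ge> M)"

definition seq_equiv :: "(nat \<Rightarrow> 'x::metric_space) \<Rightarrow> (nat \<Rightarrow> 'x) \<Rightarrow> bool" where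
  "seq_equiv s u \<longleftrightarrow> (\<forall>b M. \<exists>N. \<forall>m\<ge>N. \<forall>n\<ge>N. gromov b (s m) (u n) \<ge> M)"

definition gromov_boundary :: "'x::metric_space itself \<Rightarrow> (nat \<Rightarrow> 'x) set set" where
  "gromov_boundary _ = {\<xi>. \<exists>s. converges_at_infinity s \<and>
       \<xi> = {u. converges_at_infinity u \<and> seq_equiv s u}}"

definition isometric_action :: "('g, 'b) monoid_scheme \<Rightarrow> ('g \<Rightarrow> 'x::metric_space \<Rightarrow> 'x) \<Rightarrow> bool" where
  "isometric_action G act \<longleftrightarrow> group G \<and>
     (\<forall>x. act \<one>\<^bsub>G\<^esub> x = x) \<and>
     (\<forall>g\<in>carrier G. \<forall>h\<in>carrier G. \<forall>x. act (g \<otimes>\<^bsub>G\<^esub> h) x = act g (act h x)) \<and>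
     (\<forall>g\<in>carrier G. \<forall>x y. dist (act g x) (act g y) = dist x y)"

definition acylindrical :: "('g, 'b) monoid_scheme \<Rightarrow> ('g \<Rightarrow> 'x::metric_space \<Rightarrow> 'x)
    \<Rightarrow> real \<Rightarrow> real \<Rightarrow> nat \<Rightarrow> bool" where
  "acylindrical G act \<delta> \<kappa> N \<longleftrightarrow> (\<forall>x y. dist x y \<ge> \<kappa> \<longrightarrow>
     (let S = {g\<in>carrier G. dist (act g x) x \<le> 100 * \<delta> \<and> dist (act g y) y \<le> 100 * \<delta>}
      in finite S \<and> card S \<le> N))"

definition standing_assumptions :: "('g, 'b) monoid_scheme \<Rightarrow> ('g \<Rightarrow> 'x::metric_space \<Rightarrow> 'x)
    \<Rightarrow> real \<Rightarrow> real \<Rightarrow> real \<Rightarrow> nat \<Rightarrow> bool" where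
  "standing_assumptions G act \<delta> \<kappa>\<^sub>0 \<rho>\<^sub>0 N\<^sub>0 \<longleftrightarrow>
     geodesic_space TYPE('x) \<and> hyperbolic_space TYPE('x) \<delta> \<and> N\<^sub>0 \<ge> 1 \<and>
     ((\<delta> > 0 \<and> \<kappa>\<^sub>0 \<ge> \<delta> \<and> \<rho>\<^sub>0 = \<delta> / real N\<^sub>0) \<or>
      (\<delta> = 0 \<and> \<kappa>\<^sub>0 \<ge> \<rho>\<^sub>0 \<and>
       (\<exists>V. simplicial_tree V \<rho>\<^sub>0 \<and> (\<forall>g\<in>carrier G. act g ` V \<subseteq> V)))) \<and>
     isometric_action G act \<and> acylindrical G act \<delta> \<kappa>\<^sub>0 N\<^sub>0"

definition translation_length :: "('g \<Rightarrow> 'x::metric_space \<Rightarrow> 'x) \<Rightarrow> 'g \<Rightarrow> real" where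
  "translation_length act g = (INF x. dist (act g x) x)"

definition hyperbolic_elem :: "('g, 'b) monoid_scheme \<Rightarrow> ('g \<Rightarrow> 'x::metric_space \<Rightarrow> 'x) \<Rightarrow> 'g \<Rightarrow> bool" where
  "hyperbolic_elem G act g \<longleftrightarrow>
     (\<exists>x l. l > 0 \<and> (\<lambda>n. dist (act (g [^]\<^bsub>G\<^esub> (n::nat)) x) x / real n) \<longlonglongrightarrow> l)"

definition limit_set :: "('g \<Rightarrow> 'x::metric_space \<Rightarrow> 'x) \<Rightarrow> 'g set \<Rightarrow> (nat \<Rightarrow> 'x) set set" where
  "limit_set act H = {\<xi> \<in> gromov_boundary TYPE('x).
      \<exists>h x. (\<forall>n. h n \<in> H) \<and> (\<lambda>n. act (h n) x) \<in> \<xi>}"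

definition elementary :: "('g, 'b) monoid_scheme \<Rightarrow> ('g \<Rightarrow> 'x::metric_space \<Rightarrow> 'x) \<Rightarrow> 'g set \<Rightarrow> bool" where
  "elementary G act H \<longleftrightarrow> subgroup H G \<and> finite (limit_set act H) \<and> card (limit_set act H) \<le> 2"

definition loxodromic :: "('g, 'b) monoid_scheme \<Rightarrow> ('g \<Rightarrow> 'x::metric_space \<Rightarrow> 'x) \<Rightarrow> 'g set \<Rightarrow> bool" where
  "loxodromic G act H \<longleftrightarrow> elementary G act H \<and> (\<exists>g\<in>H. hyperbolic_elem G act g)"

definition max_loxodromic :: "('g, 'b) monoid_scheme \<Rightarrow> ('g \<Rightarrow> 'x::metric_space \<Rightarrow> 'x) \<Rightarrow> 'g set \<Rightarrow> bool" where
  "max_loxodromic G act E \<longleftrightarrow> loxodromic G act E \<and>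
     (\<forall>F. loxodromic G act F \<and> E \<subseteq> F \<longrightarrow> F = E)"

definition subgroup_trlen :: "('g \<Rightarrow> 'x::metric_space \<Rightarrow> 'x) \<Rightarrow> real \<Rightarrow> 'g set \<Rightarrow> real" where
  "subgroup_trlen act \<delta> E = Inf {translation_length act g | g. g \<in> E \<and> translation_length act g > 200 * \<delta>}"

definition has_endpoints :: "('g \<Rightarrow> 'x::metric_space \<Rightarrow> 'x) \<Rightarrow> 'g set \<Rightarrow> (real \<Rightarrow> 'x) \<Rightarrow> bool" where
  "has_endpoints act E \<gamma> \<longleftrightarrow> (\<exists>\<xi>p \<xi>m. \<xi>p \<in> gromov_boundary TYPE('x) \<and> \<xi>m \<in> gromov_boundary TYPE('x) \<and>
      (\<lambda>n. \<gamma> (real n)) \<in> \<xi>p \<and> (\<lambda>n. \<gamma> (- real n)) \<in> \<xi>m \<and> {\<xi>p, \<xi>m} = limit_set act E)"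

definition C_set :: "('g \<Rightarrow> 'x::metric_space \<Rightarrow> 'x) \<Rightarrow> real \<Rightarrow> 'g set \<Rightarrow> 'x set" where
  "C_set act \<delta> E = (if \<delta> = 0
     then {x. \<exists>\<gamma> s. geodesic_line \<gamma> \<and> has_endpoints act E \<gamma> \<and> x = \<gamma> s}
     else {x. \<exists>\<gamma> s. local_quasi_geodesic (200 * \<delta>) \<delta> \<gamma> \<and> has_endpoints act E \<gamma> \<and>
                dist x (\<gamma> s) \<le> 40 * \<delta>})"

definition E_reduced :: "('g, 'b) monoid_scheme \<Rightarrow> ('g \<Rightarrow> 'x::metric_space \<Rightarrow> 'x) \<Rightarrow> real
    \<Rightarrow> 'g set \<Rightarrow> 'g \<Rightarrow> 'x \<Rightarrow> bool" where
  "E_reduced G act \<delta> E t x\<^sub>0 \<longleftrightarrow> x\<^sub>0 \<in> C_set act \<delta> E \<and>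
     dist (act t x\<^sub>0) x\<^sub>0 = (INF ef \<in> E \<times> E. dist (act (fst ef \<otimes>\<^bsub>G\<^esub> t \<otimes>\<^bsub>G\<^esub> snd ef) x\<^sub>0) x\<^sub>0)"

end

theory Submission
  imports Defs
begin

text \<open>Let \<open>e \<in> E\<close> with \<open>[e] > 200\<delta>\<close> and suppose \<open>(t x\<^sub>0, v x\<^sub>0)\<^bsub>x\<^sub>0\<^esub>\<close> is large, so
  that \<open>t x\<^sub>0\<close> and \<open>v x\<^sub>0\<close> leave \<open>x\<^sub>0\<close> in the same direction along the quasi-axis of
  \<open>E\<close>. Since \<open>e\<close> and \<open>e\<inverse>\<close> move \<open>x\<^sub>0\<close> to opposite sides of the axis, one of them,
  \<open>f\<close>, moves it towards \<open>v x\<^sub>0\<close>, and the orbit \<open>f\<^sup>k x\<^sub>0\<close> runs along the axis in that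
  direction with linear speed. As \<open>t\<close> is reduced, \<open>t x\<^sub>0\<close> is not closer to \<open>f\<^sup>k x\<^sub>0\<close>
  than to \<open>x\<^sub>0\<close>, so \<open>(f\<^sup>k x\<^sub>0, t x\<^sub>0)\<^bsub>x\<^sub>0\<^esub> \<le> |f\<^sup>k x\<^sub>0 - x\<^sub>0| / 2\<close>, whereas
  \<open>(f\<^sup>k x\<^sub>0, v x\<^sub>0)\<^bsub>x\<^sub>0\<^esub>\<close> is about \<open>min |f\<^sup>k x\<^sub>0 - x\<^sub>0| |v x\<^sub>0 - x\<^sub>0|\<close>. Hyperbolicity at
  the first \<open>k\<close> for which \<open>|f\<^sup>k x\<^sub>0 - x\<^sub>0|\<close> exceeds a fixed multiple of \<open>\<delta>\<close> bounds the
  Gromov product by \<open>|f x\<^sub>0 - x\<^sub>0| / 2 + O(\<delta>) \<le> [e] / 2 + O(\<delta>)\<close>; taking the infimum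
  over \<open>e\<close> gives the claim. The element \<open>t\<inverse>\<close> is reduced as well.

  The quasi-axis enters through paths whose Gromov products at intermediate points are
  at most \<open>5\<delta>/2\<close>: the axis itself in a tree, and the local quasi-geodesics defining
  \<open>C\<^sub>E\<close> otherwise.\<close>

lemma gromov_double: "2 * gromov x p q = dist p x + dist q x - dist p q"
  by (simp add: gromov_def)

lemma gromov_commute: "gromov x p q = gromov x q p"
  by (simp add: gromov_def dist_commute add.commute)

lemma gromov_nonneg: "0 \<le> gromov x p q"
  using dist_triangle[of p q x] by (simp add: gromov_def dist_commute)

lemma gromov_le_dist_left: "gromov x p q \<le> dist p x"
  using dist_triangle[of q x p] by (simp add: gromov_def dist_commute)

lemma gromov_le_dist_right: "gromov x p q \<le> dist q x"
  using dist_triangle[of p x q] by (simp add: gromov_def dist_commute)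

lemma gromov_self: "gromov x p p = dist p x"
  by (simp add: gromov_def)

lemma gromov_base_left: "gromov x x q = 0"
  by (simp add: gromov_def dist_commute)

lemma gromov_add_gromov: "gromov x p q + gromov p x q = dist p x"
  by (simp add: gromov_def dist_commute field_simps)

lemma dist_eq_gromov: "dist p q = dist p x + dist q x - 2 * gromov x p q"
  using gromov_double[of x p q] by linarith

lemma gromov_perturb: "gromov x p q \<le> gromov y p' q' + dist x y + dist p p' + dist q q'"
  using dist_triangle[of p x p'] dist_triangle[of p' x y] dist_triangle[of q x q']
    dist_triangle[of q' x y] dist_triangle[of p' q' p] dist_triangle[of p q' q]
  unfolding gromov_def by (simp add: dist_commute field_simps)

section \<open>Aligned paths\<close>

definition same_side :: "real \<Rightarrow> real \<Rightarrow> real \<Rightarrow> bool" where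
  "same_side s a b \<longleftrightarrow> (a \<le> s \<and> b \<le> s) \<or> (s \<le> a \<and> s \<le> b)"

definition aligned :: "(real \<Rightarrow> 'x::metric_space) \<Rightarrow> real \<Rightarrow> bool" where
  "aligned \<gamma> K \<longleftrightarrow> (\<forall>a b. dist (\<gamma> a) (\<gamma> b) \<le> \<bar>a - b\<bar>) \<and>
     (\<forall>a b c. a \<le> b \<longrightarrow> b \<le> c \<longrightarrow> gromov (\<gamma> b) (\<gamma> a) (\<gamma> c) \<le> K)"

lemma aligned_dist_le: "aligned \<gamma> K \<Longrightarrow> dist (\<gamma> a) (\<gamma> b) \<le> \<bar>a - b\<bar>"
  unfolding aligned_def by blast

lemma aligned_gromov_le: "aligned \<gamma> K \<Longrightarrow> a \<le> b \<Longrightarrow> b \<le> c \<Longrightarrow> gromov (\<gamma> b) (\<gamma> a) (\<gamma> c) \<le> K"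
  unfolding aligned_def by blast

lemma aligned_continuous_on: "aligned \<gamma> K \<Longrightarrow> continuous_on S \<gamma>"
  by (rule lipschitz_on_continuous_on[of 1])
    (auto simp: lipschitz_on_def dist_real_def intro: aligned_dist_le)

lemma geodesic_line_aligned: "geodesic_line \<gamma> \<Longrightarrow> aligned \<gamma> 0"
  by (auto simp: aligned_def geodesic_line_def gromov_def)

lemma aligned_gromov_between:
  assumes "aligned \<gamma> K" "(a \<le> s \<and> s \<le> b) \<or> (b \<le> s \<and> s \<le> a)"
  shows "gromov (\<gamma> s) (\<gamma> a) (\<gamma> b) \<le> K"
  using assms aligned_gromov_le[of \<gamma> K a s b] aligned_gromov_le[of \<gamma> K b s a]
    gromov_commute[of "\<gamma> s" "\<gamma> a" "\<gamma> b"]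
  by auto

lemma aligned_gromov_same_side:
  assumes al: "aligned \<gamma> K" and side: "same_side s a b"
  shows "min (dist (\<gamma> a) (\<gamma> s)) (dist (\<gamma> b) (\<gamma> s)) - K \<le> gromov (\<gamma> s) (\<gamma> a) (\<gamma> b)"
proof -
  have "gromov (\<gamma> s) (\<gamma> a) (\<gamma> b) \<ge> dist (\<gamma> a) (\<gamma> s) - K"
    if "s \<le> a \<and> a \<le> b \<or> b \<le> a \<and> a \<le> s" for a b
  proof -
    have "gromov (\<gamma> a) (\<gamma> s) (\<gamma> b) \<le> K"
      using that aligned_gromov_le[OF al, of s a b] aligned_gromov_le[OF al, of b a s]
        gromov_commute[of "\<gamma> a" "\<gamma> s" "\<gamma> b"] by auto
    then show ?thesis using gromov_add_gromov[of "\<gamma> s" "\<gamma> a" "\<gamma> b"] by linarith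
  qed
  from this[of a b] this[of b a] side show ?thesis
    unfolding same_side_def by (cases "a \<le> b") (auto simp: gromov_commute min_def)
qed

lemma gromov_near_between:
  assumes "aligned \<gamma> K" "(a \<le> s \<and> s \<le> b) \<or> (b \<le> s \<and> s \<le> a)"
    and "dist p (\<gamma> a) \<le> R" "dist p' (\<gamma> b) \<le> R"
  shows "gromov (\<gamma> s) p p' \<le> K + 2 * R"
  using aligned_gromov_between[OF assms(1,2)] gromov_perturb[of "\<gamma> s" p p' "\<gamma> s" "\<gamma> a" "\<gamma> b"] assms(3,4)
  by simp

lemma gromov_near_same_side:
  assumes "aligned \<gamma> K" "same_side s a b"
    and "dist p (\<gamma> a) \<le> R" "dist p' (\<gamma> b) \<le> R" "dist x (\<gamma> s) \<le> r"
  shows "min (dist p x) (dist p' x) - (K + 3 * R + 2 * r) \<le> gromov x p p'"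
proof -
  have "dist p x \<le> dist (\<gamma> a) (\<gamma> s) + R + r" "dist p' x \<le> dist (\<gamma> b) (\<gamma> s) + R + r"
    using dist_triangle[of p x "\<gamma> a"] dist_triangle[of "\<gamma> a" x "\<gamma> s"]
      dist_triangle[of p' x "\<gamma> b"] dist_triangle[of "\<gamma> b" x "\<gamma> s"] assms(3-5)
    by (simp_all add: dist_commute)
  then show ?thesis
    using aligned_gromov_same_side[OF assms(1,2)] gromov_perturb[of "\<gamma> s" "\<gamma> a" "\<gamma> b" x p p'] assms(3-5)
    by (simp add: dist_commute min_def split: if_splits)
qed

lemma seq_equiv_sym: "seq_equiv u w \<Longrightarrow> seq_equiv w u"
  unfolding seq_equiv_def by (metis gromov_commute)

lemma seq_equiv_refl: "converges_at_infinity u \<Longrightarrow> seq_equiv u u"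
  unfolding converges_at_infinity_def seq_equiv_def by blast

lemma gromov_boundary_converges:
  "\<xi> \<in> gromov_boundary TYPE('x::metric_space) \<Longrightarrow> u \<in> \<xi> \<Longrightarrow> converges_at_infinity u"
  unfolding gromov_boundary_def by blast

lemma aligned_ends_not_seq_equiv:
  assumes "aligned \<gamma> K"
  shows "\<not> seq_equiv (\<lambda>n. \<gamma> (real n)) (\<lambda>n. \<gamma> (- real n))"
proof
  assume "seq_equiv (\<lambda>n. \<gamma> (real n)) (\<lambda>n. \<gamma> (- real n))"
  then obtain N where "\<forall>m\<ge>N. \<forall>n\<ge>N. K + 1 \<le> gromov (\<gamma> 0) (\<gamma> (real m)) (\<gamma> (- real n))"
    unfolding seq_equiv_def by blast
  then have "K + 1 \<le> gromov (\<gamma> 0) (\<gamma> (real N)) (\<gamma> (- real N))"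
    by simp
  moreover have "gromov (\<gamma> 0) (\<gamma> (- real N)) (\<gamma> (real N)) \<le> K"
    using aligned_gromov_le[OF assms, of "- real N" 0 "real N"] by simp
  ultimately show False
    using gromov_commute[of "\<gamma> 0" "\<gamma> (real N)" "\<gamma> (- real N)"] by linarith
qed

section \<open>Local quasi-geodesics\<close>

text \<open>The two consequences of being a \<open>200\<delta>\<close>-local \<open>1\<close>-quasi-geodesic that are used
  below; unlike path lengths, they are visibly preserved by reversing the parameter.\<close>
definition local_qg_bounds :: "real \<Rightarrow> (real \<Rightarrow> 'x::metric_space) \<Rightarrow> bool" where
  "local_qg_bounds \<delta> \<gamma> \<longleftrightarrow> (\<forall>a b. dist (\<gamma> a) (\<gamma> b) \<le> \<bar>a - b\<bar>) \<and>
     (\<forall>a b. \<bar>a - b\<bar> \<le> 200 * \<delta> \<longrightarrow> \<bar>a - b\<bar> \<le> dist (\<gamma> a) (\<gamma> b) + \<delta>)"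

lemma arclength_param_dist_le:
  assumes "arclength_param \<gamma>" "a \<le> b"
  shows "dist (\<gamma> a) (\<gamma> b) \<le> b - a"
proof -
  have "ereal (\<Sum>i<length [a, b] - 1. dist (\<gamma> ([a, b] ! i)) (\<gamma> ([a, b] ! Suc i))) \<le> path_length \<gamma> a b"
    unfolding path_length_def by (rule SUP_upper) (use assms(2) in auto)
  also have "\<dots> = ereal (b - a)"
    using assms unfolding arclength_param_def by blast
  finally show ?thesis by simp
qed

lemma local_quasi_geodesic_bounds:
  assumes "local_quasi_geodesic (200 * \<delta>) \<delta> \<gamma>"
  shows "local_qg_bounds \<delta> \<gamma>"
proof -
  have arc: "arclength_param \<gamma>"
    and short: "\<And>a b. a \<le> b \<Longrightarrow> b - a \<le> 200 * \<delta> \<Longrightarrow> path_length \<gamma> a b \<le> ereal (dist (\<gamma> a) (\<gamma> b) + \<delta>)"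
    using assms unfolding local_quasi_geodesic_def by blast+
  have ordered: "dist (\<gamma> a) (\<gamma> b) \<le> b - a \<and> (b - a \<le> 200 * \<delta> \<longrightarrow> b - a \<le> dist (\<gamma> a) (\<gamma> b) + \<delta>)"
    if "a \<le> b" for a b
    using arclength_param_dist_le[OF arc that] short[OF that] arc that
    unfolding arclength_param_def by auto
  have "dist (\<gamma> a) (\<gamma> b) \<le> \<bar>a - b\<bar> \<and> (\<bar>a - b\<bar> \<le> 200 * \<delta> \<longrightarrow> \<bar>a - b\<bar> \<le> dist (\<gamma> a) (\<gamma> b) + \<delta>)"
    for a b
  proof (cases "a \<le> b")
    case True
    then show ?thesis using ordered[of a b] by simp
  next
    case False
    then show ?thesis using ordered[of b a] by (simp add: dist_commute)
  qed
  then show ?thesis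
    unfolding local_qg_bounds_def by blast
qed

lemma local_qg_bounds_reflect:
  assumes "local_qg_bounds \<delta> \<gamma>"
  shows "local_qg_bounds \<delta> (\<lambda>s. \<gamma> (- s))"
proof -
  have "\<bar>- a - - b\<bar> = \<bar>a - b\<bar>" for a b :: real
    by linarith
  then show ?thesis
    using assms unfolding local_qg_bounds_def by metis
qed

lemma local_qg_bounds_dist_ge:
  "local_qg_bounds \<delta> \<gamma> \<Longrightarrow> \<bar>a - b\<bar> \<le> 200 * \<delta> \<Longrightarrow> \<bar>a - b\<bar> - \<delta> \<le> dist (\<gamma> a) (\<gamma> b)"
  unfolding local_qg_bounds_def by force

lemma local_qg_bounds_gromov_le:
  assumes "local_qg_bounds \<delta> \<gamma>" "u \<le> w" "w \<le> z" "z - u \<le> 200 * \<delta>"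
  shows "gromov (\<gamma> w) (\<gamma> u) (\<gamma> z) \<le> \<delta> / 2"
proof -
  have lip: "dist (\<gamma> a) (\<gamma> b) \<le> \<bar>a - b\<bar>" for a b
    using assms(1) unfolding local_qg_bounds_def by blast
  have "\<bar>u - w\<bar> = w - u" "\<bar>z - w\<bar> = z - w" "\<bar>u - z\<bar> = z - u"
    using assms(2,3) by simp_all
  then have "dist (\<gamma> u) (\<gamma> w) \<le> w - u" "dist (\<gamma> z) (\<gamma> w) \<le> z - w" "z - u - \<delta> \<le> dist (\<gamma> u) (\<gamma> z)"
    using lip[of u w] lip[of z w] local_qg_bounds_dist_ge[OF assms(1), of u z] assms(4)
    by simp_all
  then show ?thesis by (simp add: gromov_def dist_commute)
qed

lemma exists_subdivision:
  fixes L d :: real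
  assumes d: "0 < d" and L: "d / 2 \<le> L"
  obtains n h where "1 \<le> n" "d / 2 \<le> h" "h \<le> d" "h * real n = L"
proof -
  define n where "n = nat \<lceil>L / d\<rceil>"
  define h where "h = L / real n"
  have "0 < L / d"
    using d L by simp
  then have n: "1 \<le> n" "L / d \<le> real n" "real n - 1 < L / d"
    unfolding n_def by linarith+
  then have "h * real n = L"
    by (simp add: h_def)
  moreover have "h \<le> d"
  proof -
    have "L \<le> real n * d"
      using n(2) d by (simp add: pos_divide_le_eq)
    then show ?thesis
      unfolding h_def using n(1) by (simp add: pos_divide_le_eq mult.commute)
  qed
  moreover have "d / 2 \<le> h"
  proof (cases "n = 1")
    case True
    then show ?thesis
      unfolding h_def using L by simp
  next
    case False
    then have "2 \<le> real n"
      using n(1) by simp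
    moreover have "(real n - 1) * d < L"
      using n(3) d by (simp add: pos_less_divide_eq)
    moreover have "0 \<le> d * (real n - 2)"
      using \<open>2 \<le> real n\<close> d by simp
    ultimately have "d / 2 * real n \<le> L"
      by (simp add: algebra_simps)
    then show ?thesis
      unfolding h_def using n(1) by (simp add: pos_le_divide_eq)
  qed
  ultimately show ?thesis
    using that n(1) by blast
qed

section \<open>Hyperbolic spaces\<close>

locale delta_hyperbolic =
  fixes X :: "'x::metric_space itself" and \<delta> :: real
  assumes hyperbolic: "hyperbolic_space X \<delta>"
begin

lemma delta_nonneg: "0 \<le> \<delta>"
  using hyperbolic by (simp add: hyperbolic_space_def)

lemma gromov_min: "min (gromov x p q) (gromov x q r) - \<delta> \<le> gromov (x :: 'x) p r"
  using hyperbolic unfolding hyperbolic_space_def by blast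

lemma gromov_min3:
  "min (gromov x a b) (min (gromov x b c) (gromov x c d)) - 2 * \<delta> \<le> gromov (x :: 'x) a d"
  using gromov_min[of x a b d] gromov_min[of x b c d] delta_nonneg
  by (simp add: min_def split: if_splits)

text \<open>Chains of points \<open>x 0, \<dots>, x n\<close> with long steps and small Gromov products at
  the inner points behave like points on a geodesic.\<close>
lemma chain_gromov_start_next:
  fixes x :: "nat \<Rightarrow> 'x"
  assumes c: "0 \<le> c" "2 * c + 3 * \<delta> < \<tau>"
    and turn: "\<And>i. 0 < i \<Longrightarrow> i < n \<Longrightarrow> gromov (x i) (x (i - 1)) (x (Suc i)) \<le> c"
    and step: "\<And>i. 0 < i \<Longrightarrow> i \<le> n \<Longrightarrow> \<tau> \<le> dist (x i) (x (i - 1))"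
  shows "Suc k \<le> n \<Longrightarrow> gromov (x k) (x 0) (x (Suc k)) \<le> c + \<delta>"
proof (induction k)
  case 0
  show ?case using c delta_nonneg by (simp add: gromov_base_left)
next
  case (Suc k)
  then have "gromov (x k) (x 0) (x (Suc k)) \<le> c + \<delta>" by simp
  moreover have "gromov (x k) (x (Suc k)) (x 0) + gromov (x (Suc k)) (x k) (x 0) = dist (x (Suc k)) (x k)"
    by (rule gromov_add_gromov)
  moreover have "min (gromov (x (Suc k)) (x k) (x 0)) (gromov (x (Suc k)) (x 0) (x (Suc (Suc k)))) - \<delta>
      \<le> gromov (x (Suc k)) (x k) (x (Suc (Suc k)))"
    by (rule gromov_min)
  moreover have "gromov (x (Suc k)) (x k) (x (Suc (Suc k))) \<le> c" "\<tau> \<le> dist (x (Suc k)) (x k)"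
    using turn[of "Suc k"] step[of "Suc k"] Suc.prems by simp_all
  ultimately show ?case
    using c delta_nonneg gromov_commute[of "x k" "x (Suc k)" "x 0"] by (simp add: min_def split: if_splits)
qed

lemma chain_gromov_start_end:
  fixes x :: "nat \<Rightarrow> 'x"
  assumes c: "0 \<le> c" "2 * c + 3 * \<delta> < \<tau>"
    and turn: "\<And>i. 0 < i \<Longrightarrow> i < n \<Longrightarrow> gromov (x i) (x (i - 1)) (x (Suc i)) \<le> c"
    and step: "\<And>i. 0 < i \<Longrightarrow> i \<le> n \<Longrightarrow> \<tau> \<le> dist (x i) (x (i - 1))"
    and i: "0 < i" "i < n"
  shows "gromov (x i) (x 0) (x n) \<le> c + 2 * \<delta>"
proof -
  define y where "y j = x (n - j)" for j
  have turn_y: "gromov (y j) (y (j - 1)) (y (Suc j)) \<le> c" if "0 < j" "j < n" for j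
    using turn[of "n - j"] that gromov_commute[of "x (n - j)"]
    by (simp add: y_def Suc_diff_Suc Suc_diff_le)
  have step_y: "\<tau> \<le> dist (y j) (y (j - 1))" if "0 < j" "j \<le> n" for j
    using step[of "Suc (n - j)"] that by (simp add: y_def dist_commute Suc_diff_le)
  have "gromov (x (i - 1)) (x 0) (x i) \<le> c + \<delta>"
    using chain_gromov_start_next[where x = x and n = n, OF c turn step, of "i - 1"] i by simp
  then have behind: "c + 2 * \<delta> < gromov (x i) (x (i - 1)) (x 0)"
    using gromov_add_gromov[of "x (i - 1)" "x i" "x 0"] step[of i] i c
      gromov_commute[of "x (i - 1)" "x i" "x 0"] by (simp add: dist_commute)
  have "gromov (y (n - i - 1)) (y 0) (y (Suc (n - i - 1))) \<le> c + \<delta>"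
    using chain_gromov_start_next[where x = y and n = n, OF c turn_y step_y, of "n - i - 1"] i by simp
  then have "gromov (x (Suc i)) (x n) (x i) \<le> c + \<delta>"
    using i by (simp add: y_def Suc_diff_Suc)
  then have ahead: "c + 2 * \<delta> < gromov (x i) (x n) (x (Suc i))"
    using gromov_add_gromov[of "x (Suc i)" "x i" "x n"] step[of "Suc i"] i c
      gromov_commute[of "x (Suc i)" "x i" "x n"] gromov_commute[of "x i" "x (Suc i)" "x n"]
    by (simp add: dist_commute)
  have "min (gromov (x i) (x (i - 1)) (x 0)) (min (gromov (x i) (x 0) (x n)) (gromov (x i) (x n) (x (Suc i))))
      - 2 * \<delta> \<le> gromov (x i) (x (i - 1)) (x (Suc i))"
    by (rule gromov_min3)
  then show ?thesis
    using turn[of i] i behind ahead by (simp add: min_def split: if_splits)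
qed

lemma chain_dist_start:
  fixes x :: "nat \<Rightarrow> 'x"
  assumes c: "0 \<le> c" "2 * c + 3 * \<delta> < \<tau>"
    and turn: "\<And>i. 0 < i \<Longrightarrow> i < n \<Longrightarrow> gromov (x i) (x (i - 1)) (x (Suc i)) \<le> c"
    and step: "\<And>i. 0 < i \<Longrightarrow> i \<le> n \<Longrightarrow> \<tau> \<le> dist (x i) (x (i - 1))"
  shows "k \<le> n \<Longrightarrow> real k * (\<tau> - 2 * c - 2 * \<delta>) \<le> dist (x k) (x 0)"
proof (induction k)
  case (Suc k)
  have "gromov (x k) (x 0) (x (Suc k)) \<le> c + \<delta>"
    using chain_gromov_start_next[where x = x and n = n, OF c turn step] Suc.prems by simp
  moreover have "dist (x (Suc k)) (x 0) = dist (x (Suc k)) (x k) + dist (x 0) (x k) - 2 * gromov (x k) (x (Suc k)) (x 0)"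
    by (rule dist_eq_gromov)
  moreover have "\<tau> \<le> dist (x (Suc k)) (x k)"
    using step[of "Suc k"] Suc.prems by simp
  ultimately show ?case
    using Suc gromov_commute[of "x k" "x (Suc k)" "x 0"] by (simp add: dist_commute algebra_simps)
qed simp

lemma local_qg_subdivision:
  fixes \<gamma> :: "real \<Rightarrow> 'x"
  assumes \<delta>: "0 < \<delta>" and \<gamma>: "local_qg_bounds \<delta> \<gamma>" and ac: "50 * \<delta> \<le> c - a"
  shows "\<exists>h. 50 * \<delta> \<le> h \<and> h \<le> 100 * \<delta> \<and> gromov (\<gamma> (c - h)) (\<gamma> a) (\<gamma> c) \<le> 3/2 * \<delta>"
proof -
  obtain n h where n: "1 \<le> n" and h_ge: "50 * \<delta> \<le> h" and h_le: "h \<le> 100 * \<delta>"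
    and hn: "h * real n = c - a"
    using exists_subdivision[of "100 * \<delta>" "c - a"] \<delta> ac by auto
  define x where "x i = \<gamma> (a + real i * h)" for i
  have pred: "real (i - 1) = real i - 1" if "0 < i" for i :: nat
    using that by simp
  have turn: "gromov (x i) (x (i - 1)) (x (Suc i)) \<le> \<delta> / 2" if "0 < i" for i
    unfolding x_def pred[OF that]
    by (rule local_qg_bounds_gromov_le[OF \<gamma>]) (use h_ge h_le \<delta> in \<open>auto simp: algebra_simps\<close>)
  have step: "h - \<delta> \<le> dist (x i) (x (i - 1))" if "0 < i" for i
    using local_qg_bounds_dist_ge[OF \<gamma>, of "a + real i * h" "a + (real i - 1) * h"] h_ge h_le \<delta>
    unfolding x_def pred[OF that] by (simp add: algebra_simps)
  have "gromov (x (n - 1)) (x 0) (x (Suc (n - 1))) \<le> \<delta> / 2 + \<delta>"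
    by (rule chain_gromov_start_next[where x = x and n = n]) (use turn step h_ge \<delta> n in auto)
  moreover have "x (Suc (n - 1)) = \<gamma> c" "x (n - 1) = \<gamma> (c - h)" "x 0 = \<gamma> a"
    using n hn by (simp_all add: x_def algebra_simps)
  ultimately show ?thesis
    using h_ge h_le by auto
qed

lemma local_qg_back_point:
  fixes \<gamma> :: "real \<Rightarrow> 'x"
  assumes \<delta>: "0 < \<delta>" and \<gamma>: "local_qg_bounds \<delta> \<gamma>" and "a \<le> b"
  shows "\<exists>a'. a' \<le> b \<and> b - a' \<le> 100 * \<delta> \<and>
    min (47 * \<delta>) (dist (\<gamma> a) (\<gamma> b)) \<le> gromov (\<gamma> b) (\<gamma> a') (\<gamma> a)"
proof (cases "b - a < 50 * \<delta>")
  case True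
  then show ?thesis
    using \<open>a \<le> b\<close> by (intro exI[of _ a]) (simp add: gromov_self dist_commute)
next
  case False
  then obtain h where h: "50 * \<delta> \<le> h" "h \<le> 100 * \<delta>" "gromov (\<gamma> (b - h)) (\<gamma> a) (\<gamma> b) \<le> 3/2 * \<delta>"
    using local_qg_subdivision[OF \<delta> \<gamma>, where a = a and c = b] by auto
  have "h - \<delta> \<le> dist (\<gamma> b) (\<gamma> (b - h))"
    using local_qg_bounds_dist_ge[OF \<gamma>, of b "b - h"] h \<delta> by simp
  then have "47 * \<delta> \<le> gromov (\<gamma> b) (\<gamma> (b - h)) (\<gamma> a)"
    using gromov_add_gromov[of "\<gamma> (b - h)" "\<gamma> b" "\<gamma> a"] gromov_commute[of "\<gamma> (b - h)" "\<gamma> a" "\<gamma> b"] h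
    by linarith
  then show ?thesis
    using h by (intro exI[of _ "b - h"]) (simp add: min_le_iff_disj)
qed

text \<open>Points \<open>\<gamma> a'\<close> and \<open>\<gamma> c'\<close> within \<open>100\<delta>\<close> of \<open>\<gamma> b\<close> on either side see
  \<open>\<gamma> a\<close>, resp. \<open>\<gamma> c\<close>, at a large Gromov product from \<open>\<gamma> b\<close>; the local estimate
  on \<open>[a', c']\<close> then transfers to \<open>\<gamma> a\<close> and \<open>\<gamma> c\<close> by hyperbolicity.\<close>
lemma local_qg_aligned:
  fixes \<gamma> :: "real \<Rightarrow> 'x"
  assumes \<delta>: "0 < \<delta>" and \<gamma>: "local_qg_bounds \<delta> \<gamma>"
  shows "aligned \<gamma> (5/2 * \<delta>)"
  unfolding aligned_def
proof (intro conjI allI impI)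
  show "dist (\<gamma> a) (\<gamma> b) \<le> \<bar>a - b\<bar>" for a b
    using \<gamma> unfolding local_qg_bounds_def by blast
  fix a b c :: real
  assume "a \<le> b" "b \<le> c"
  obtain a' where a': "a' \<le> b" "b - a' \<le> 100 * \<delta>"
    "min (47 * \<delta>) (dist (\<gamma> a) (\<gamma> b)) \<le> gromov (\<gamma> b) (\<gamma> a') (\<gamma> a)"
    using local_qg_back_point[OF \<delta> \<gamma> \<open>a \<le> b\<close>] by blast
  obtain c' where c': "c' \<le> - b" "- b - c' \<le> 100 * \<delta>"
    "min (47 * \<delta>) (dist (\<gamma> c) (\<gamma> b)) \<le> gromov (\<gamma> b) (\<gamma> (- c')) (\<gamma> c)"
    using local_qg_back_point[OF \<delta> local_qg_bounds_reflect[OF \<gamma>], of "- c" "- b"] \<open>b \<le> c\<close> by auto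
  have "gromov (\<gamma> b) (\<gamma> a') (\<gamma> (- c')) \<le> \<delta> / 2"
    by (rule local_qg_bounds_gromov_le[OF \<gamma>]) (use a' c' in auto)
  moreover have "min (gromov (\<gamma> b) (\<gamma> a') (\<gamma> a)) (min (gromov (\<gamma> b) (\<gamma> a) (\<gamma> c))
      (gromov (\<gamma> b) (\<gamma> c) (\<gamma> (- c')))) - 2 * \<delta> \<le> gromov (\<gamma> b) (\<gamma> a') (\<gamma> (- c'))"
    by (rule gromov_min3)
  moreover have "gromov (\<gamma> b) (\<gamma> a) (\<gamma> c) \<le> dist (\<gamma> a) (\<gamma> b)" "gromov (\<gamma> b) (\<gamma> a) (\<gamma> c) \<le> dist (\<gamma> c) (\<gamma> b)"
    using gromov_le_dist_left[of "\<gamma> b" "\<gamma> a" "\<gamma> c"] gromov_le_dist_right[of "\<gamma> b" "\<gamma> a" "\<gamma> c"]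
    by (simp_all add: dist_commute)
  ultimately show "gromov (\<gamma> b) (\<gamma> a) (\<gamma> c) \<le> 5/2 * \<delta>"
    using a'(3) c'(3) \<delta> gromov_commute[of "\<gamma> b" "\<gamma> c" "\<gamma> (- c')"]
    by (simp add: min_def split: if_splits)
qed

lemma aligned_near_of_gromov_le:
  fixes \<gamma> :: "real \<Rightarrow> 'x"
  assumes al: "aligned \<gamma> K" and "0 \<le> K" "a \<le> b" and small: "gromov p (\<gamma> a) (\<gamma> b) \<le> c"
  shows "\<exists>r. dist p (\<gamma> r) \<le> c + 2 * K + 2 * \<delta>"
proof -
  define \<rho> where "\<rho> = gromov (\<gamma> a) p (\<gamma> b)"
  have "continuous_on {a..b} (\<lambda>t. dist (\<gamma> t) (\<gamma> a))"
    by (intro continuous_intros aligned_continuous_on[OF al])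
  moreover have "dist (\<gamma> a) (\<gamma> a) \<le> \<rho>" "\<rho> \<le> dist (\<gamma> b) (\<gamma> a)"
    unfolding \<rho>_def using gromov_nonneg gromov_le_dist_right by simp_all
  ultimately obtain t where t: "a \<le> t" "t \<le> b" "dist (\<gamma> t) (\<gamma> a) = \<rho>"
    using IVT'[of "\<lambda>t. dist (\<gamma> t) (\<gamma> a)" a \<rho> b] \<open>a \<le> b\<close> by blast
  have "gromov (\<gamma> t) (\<gamma> a) (\<gamma> b) \<le> K"
    using aligned_gromov_le[OF al t(1,2)] .
  moreover have "min (gromov (\<gamma> a) p (\<gamma> b)) (gromov (\<gamma> a) (\<gamma> b) (\<gamma> t)) - \<delta> \<le> gromov (\<gamma> a) p (\<gamma> t)"
    by (rule gromov_min)
  moreover note gromov_add_gromov[of "\<gamma> a" "\<gamma> t" "\<gamma> b"] gromov_add_gromov[of "\<gamma> a" p "\<gamma> b"]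
    dist_eq_gromov[of p "\<gamma> t" "\<gamma> a"] gromov_commute[of "\<gamma> a" "\<gamma> b" "\<gamma> t"]
  ultimately have "dist p (\<gamma> t) \<le> c + 2 * K + 2 * \<delta>"
    using t(3) small \<open>0 \<le> K\<close> unfolding \<rho>_def by (simp add: min_def split: if_splits)
  then show ?thesis ..
qed

lemma seq_equiv_trans:
  fixes u :: "nat \<Rightarrow> 'x"
  assumes uv: "seq_equiv u v" and vw: "seq_equiv v w"
  shows "seq_equiv u w"
  unfolding seq_equiv_def
proof (intro allI)
  fix b M
  obtain N1 where N1: "\<forall>m\<ge>N1. \<forall>n\<ge>N1. M + \<delta> \<le> gromov b (u m) (v n)"
    using uv unfolding seq_equiv_def by blast
  obtain N2 where N2: "\<forall>m\<ge>N2. \<forall>n\<ge>N2. M + \<delta> \<le> gromov b (v m) (w n)"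
    using vw unfolding seq_equiv_def by blast
  have "M \<le> gromov b (u m) (w n)" if "max N1 N2 \<le> m" "max N1 N2 \<le> n" for m n
    using gromov_min[of b "u m" "v (max N1 N2)" "w n"] N1[rule_format, of m "max N1 N2"]
      N2[rule_format, of "max N1 N2" n] that by (simp add: min_def split: if_splits)
  then show "\<exists>N. \<forall>m\<ge>N. \<forall>n\<ge>N. M \<le> gromov b (u m) (w n)"
    by blast
qed

lemma seq_equiv_boundary:
  fixes u :: "nat \<Rightarrow> 'x"
  assumes "\<xi> \<in> gromov_boundary TYPE('x)" "u \<in> \<xi>" "w \<in> \<xi>"
  shows "seq_equiv u w"
  using assms seq_equiv_trans[OF seq_equiv_sym] unfolding gromov_boundary_def by blast

lemma gromov_le_of_seq_equiv:
  fixes p :: 'x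
  assumes "seq_equiv U P" "seq_equiv W Q" and small: "\<And>n. N \<le> n \<Longrightarrow> gromov p (W n) (U n) \<le> K"
  shows "\<exists>n\<ge>N. gromov p (Q n) (P n) \<le> K + 2 * \<delta>"
proof -
  obtain N1 where N1: "\<forall>m\<ge>N1. \<forall>n\<ge>N1. K + 2 * \<delta> + 1 \<le> gromov p (U m) (P n)"
    using assms(1) unfolding seq_equiv_def by blast
  obtain N2 where N2: "\<forall>m\<ge>N2. \<forall>n\<ge>N2. K + 2 * \<delta> + 1 \<le> gromov p (W m) (Q n)"
    using assms(2) unfolding seq_equiv_def by blast
  define n where "n = max N (max N1 N2)"
  have n: "N \<le> n" "N1 \<le> n" "N2 \<le> n"
    unfolding n_def by simp_all
  have "K + 2 * \<delta> + 1 \<le> gromov p (P n) (U n)" "K + 2 * \<delta> + 1 \<le> gromov p (W n) (Q n)"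
    using N1 N2 n gromov_commute[of p "P n" "U n"] by simp_all
  moreover have "gromov p (W n) (U n) \<le> K"
    using small n by simp
  moreover have "min (gromov p (W n) (Q n)) (min (gromov p (Q n) (P n)) (gromov p (P n) (U n))) - 2 * \<delta>
      \<le> gromov p (W n) (U n)"
    by (rule gromov_min3)
  ultimately have "gromov p (Q n) (P n) \<le> K + 2 * \<delta>"
    by (simp add: min_def split: if_splits)
  then show ?thesis
    using n by auto
qed

lemma C_set_aligned_path:
  fixes act :: "'g \<Rightarrow> 'x \<Rightarrow> 'x"
  assumes "x \<in> C_set act \<delta> E"
  obtains \<gamma> K s where "aligned \<gamma> K" "0 \<le> K" "K \<le> 5/2 * \<delta>" "has_endpoints act E \<gamma>"
    "dist x (\<gamma> s) \<le> 40 * \<delta>"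
proof (cases "\<delta> = 0")
  case True
  then obtain \<gamma> s where "geodesic_line \<gamma>" "has_endpoints act E \<gamma>" "x = \<gamma> s"
    using assms unfolding C_set_def by auto
  then show ?thesis
    using that[of \<gamma> 0 s] geodesic_line_aligned True by auto
next
  case False
  then obtain \<gamma> s where "local_quasi_geodesic (200 * \<delta>) \<delta> \<gamma>" "has_endpoints act E \<gamma>"
    "dist x (\<gamma> s) \<le> 40 * \<delta>"
    using assms unfolding C_set_def by auto
  moreover have "0 < \<delta>"
    using False delta_nonneg by simp
  ultimately show ?thesis
    using that[of \<gamma> "5/2 * \<delta>" s] local_qg_aligned local_quasi_geodesic_bounds by auto
qed

end

lemma translation_length_le: "translation_length act g \<le> dist (act g x) x"
  unfolding translation_length_def by (rule cINF_lower) (auto intro: bdd_belowI[of _ 0])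

lemma translation_length_greatest: "(\<And>x. c \<le> dist (act g x) x) \<Longrightarrow> c \<le> translation_length act g"
  unfolding translation_length_def by (rule cINF_greatest) auto

lemma le_of_eventually_mult_le:
  fixes A B C :: real
  assumes "eventually (\<lambda>k. real k * A \<le> real k * B + C) sequentially"
  shows "A \<le> B"
proof (rule ccontr)
  assume "\<not> A \<le> B"
  obtain N where N: "\<And>k. N \<le> k \<Longrightarrow> real k * A \<le> real k * B + C"
    using assms unfolding eventually_sequentially by blast
  obtain k0 :: nat where "C / (A - B) < real k0"
    using reals_Archimedean2 by blast
  moreover have "real k0 \<le> real (max N k0)"
    by simp
  ultimately have "C / (A - B) < real (max N k0)"
    by linarith
  then have "C < real (max N k0) * (A - B)"
    using \<open>\<not> A \<le> B\<close> by (simp add: pos_divide_less_eq)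
  then show False
    using N[of "max N k0"] by (simp add: algebra_simps)
qed

lemma subgroup_nat_pow_closed: "subgroup H G \<Longrightarrow> g \<in> H \<Longrightarrow> g [^]\<^bsub>G\<^esub> (n::nat) \<in> H"
  by (induction n) (simp_all add: subgroup.one_closed subgroup.m_closed)

locale isometric_group_action =
  fixes G :: "('g, 'b) monoid_scheme" (structure) and act :: "'g \<Rightarrow> 'x::metric_space \<Rightarrow> 'x"
  assumes isometric_action: "isometric_action G act"
begin

lemma group: "group G"
  using isometric_action unfolding isometric_action_def by blast

lemma act_one [simp]: "act \<one> x = x"
  using isometric_action unfolding isometric_action_def by blast

lemma act_mult: "g \<in> carrier G \<Longrightarrow> h \<in> carrier G \<Longrightarrow> act (g \<otimes> h) x = act g (act h x)"
  using isometric_action unfolding isometric_action_def by blast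

lemma dist_act [simp]: "g \<in> carrier G \<Longrightarrow> dist (act g x) (act g y) = dist x y"
  using isometric_action unfolding isometric_action_def by blast

lemma gromov_act [simp]: "g \<in> carrier G \<Longrightarrow> gromov (act g x) (act g p) (act g q) = gromov x p q"
  by (simp add: gromov_def)

lemma act_inv_act [simp]: "g \<in> carrier G \<Longrightarrow> act (inv g) (act g x) = x"
  using act_mult[of "inv g" g x] group.l_inv[OF group] group.inv_closed[OF group] by simp

lemma act_act_inv [simp]: "g \<in> carrier G \<Longrightarrow> act g (act (inv g) x) = x"
  using act_mult[of g "inv g" x] group.r_inv[OF group] group.inv_closed[OF group] by simp

lemma dist_act_left: "g \<in> carrier G \<Longrightarrow> dist (act g x) y = dist x (act (inv g) y)"
  using dist_act[of g x "act (inv g) y"] by simp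

lemma dist_act_inv_left: "g \<in> carrier G \<Longrightarrow> dist (act (inv g) x) y = dist x (act g y)"
  using dist_act[of g "act (inv g) x" y] group.inv_closed[OF group] by simp

lemma displacement_inv: "g \<in> carrier G \<Longrightarrow> dist (act (inv g) x) x = dist (act g x) x"
  using dist_act_left[of "inv g" x x] group.inv_closed[OF group] group.inv_inv[OF group]
  by (simp add: dist_commute)

lemma translation_length_inv: "g \<in> carrier G \<Longrightarrow> translation_length act (inv g) = translation_length act g"
  unfolding translation_length_def by (simp add: displacement_inv)

lemma dist_act_le: "g \<in> carrier G \<Longrightarrow> dist (act g x) y \<le> dist x x' + dist (act g x') y"
  using dist_triangle[of "act g x" y "act g x'"] by simp

lemma displacement_le:
  assumes "g \<in> carrier G"
  shows "dist (act g x) x \<le> dist (act g y) y + 2 * dist x y"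
  using dist_act_le[OF assms, of x x y] dist_triangle[of "act g y" x y] dist_commute[of y x] by linarith

lemma mult_closed [simp]: "g \<in> carrier G \<Longrightarrow> h \<in> carrier G \<Longrightarrow> g \<otimes> h \<in> carrier G"
  by (rule monoid.m_closed[OF group.is_monoid[OF group]])

lemma pow_closed [simp]: "g \<in> carrier G \<Longrightarrow> g [^] (k::nat) \<in> carrier G"
  using monoid.nat_pow_closed[OF group.is_monoid[OF group]] .

lemma act_pow_Suc: "g \<in> carrier G \<Longrightarrow> act (g [^] Suc k) x = act (g [^] k) (act g x)"
  using act_mult[of "g [^] k" g x] by simp

lemma act_pow_one: "g \<in> carrier G \<Longrightarrow> act (g [^] (1::nat)) x = act g x"
  using act_pow_Suc[of g 0 x] by simp

lemma displacement_pow_Suc_le: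
  "g \<in> carrier G \<Longrightarrow> dist (act (g [^] Suc k) x) x \<le> dist (act (g [^] k) x) x + dist (act g x) x"
  using dist_act_le[of "g [^] k" "act g x" x x] by (simp add: act_mult)

lemma displacement_pow_le: "g \<in> carrier G \<Longrightarrow> dist (act (g [^] k) x) x \<le> real k * dist (act g x) x"
proof (induction k)
  case (Suc k)
  then show ?case
    using displacement_pow_Suc_le[of g k x] by (simp add: algebra_simps)
qed simp

lemma translation_length_ge_of_growth:
  assumes g: "g \<in> carrier G" and growth: "eventually (\<lambda>k. real k * A \<le> dist (act (g [^] k) x) x) sequentially"
  shows "A \<le> translation_length act g"
proof (rule translation_length_greatest)
  fix y
  have bound: "dist (act (g [^] k) x) x \<le> real k * dist (act g y) y + 2 * dist x y" for k
    using displacement_le[of "g [^] k" x y] displacement_pow_le[OF g, of k y] g by simp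
  have "eventually (\<lambda>k. real k * A \<le> real k * dist (act g y) y + 2 * dist x y) sequentially"
    using growth by (rule eventually_mono) (use bound in \<open>fastforce intro: order_trans\<close>)
  then show "A \<le> dist (act g y) y"
    by (rule le_of_eventually_mult_le)
qed

lemma hyperbolic_elem_pow_translation_length:
  assumes g: "g \<in> carrier G" and "hyperbolic_elem G act g"
  shows "\<exists>m. B < translation_length act (g [^] (m::nat))"
proof -
  obtain x l where l: "0 < l" and lim: "(\<lambda>n. dist (act (g [^] n) x) x / real n) \<longlonglongrightarrow> l"
    using assms(2) unfolding hyperbolic_elem_def by blast
  obtain N where N: "\<And>n. N \<le> n \<Longrightarrow> l / 2 < dist (act (g [^] n) x) x / real n"
    using order_tendstoD(1)[OF lim, of "l / 2"] l unfolding eventually_sequentially by auto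
  obtain m :: nat where m: "2 * \<bar>B\<bar> / l < real m"
    using reals_Archimedean2 by blast
  have growth: "real k * (real (Suc m) * (l / 2)) \<le> dist (act ((g [^] Suc m) [^] k) x) x"
    if "max 1 N \<le> k" for k
  proof -
    have "0 < Suc m * k"
      using that by simp
    then have pos: "0 < real (Suc m * k)"
      by (simp only: of_nat_0_less_iff)
    have "N \<le> Suc m * k"
      using that le_trans[of N k "Suc m * k"] by auto
    then have "l / 2 < dist (act (g [^] (Suc m * k)) x) x / real (Suc m * k)"
      by (rule N)
    then have "l / 2 * real (Suc m * k) < dist (act (g [^] (Suc m * k)) x) x"
      by (simp only: pos_less_divide_eq[OF pos])
    moreover have "(g [^] Suc m) [^] k = g [^] (Suc m * k)"
      using monoid.nat_pow_pow[OF group.is_monoid[OF group] g] .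
    moreover have "real k * (real (Suc m) * (l / 2)) = l / 2 * real (Suc m * k)"
      by (simp only: of_nat_mult mult_ac)
    ultimately show ?thesis
      by (metis less_imp_le)
  qed
  have "real (Suc m) * (l / 2) \<le> translation_length act (g [^] Suc m)"
    using g growth by (intro translation_length_ge_of_growth[where x = x])
      (auto simp only: eventually_sequentially pow_closed)
  moreover have "2 * \<bar>B\<bar> < real m * l"
    using m l by (simp add: pos_divide_less_eq)
  moreover have "real (Suc m) * (l / 2) = real m * l / 2 + l / 2"
    by (simp add: algebra_simps)
  ultimately show ?thesis
    using l abs_ge_self[of B] by (intro exI[of _ "Suc m"]) linarith
qed

lemma le_subgroup_trlen:
  assumes "loxodromic G act E"
    and bound: "\<And>e. e \<in> E \<Longrightarrow> 200 * \<delta> < translation_length act e \<Longrightarrow> c \<le> translation_length act e"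
  shows "c \<le> subgroup_trlen act \<delta> E"
proof -
  obtain g where g: "g \<in> E" "hyperbolic_elem G act g" and sub: "subgroup E G"
    using assms(1) unfolding loxodromic_def elementary_def by blast
  then obtain m where "200 * \<delta> < translation_length act (g [^] (m::nat))"
    using hyperbolic_elem_pow_translation_length[of g "200 * \<delta>"] subgroup.mem_carrier[OF sub g(1)]
    by blast
  moreover have "g [^] m \<in> E"
    using subgroup_nat_pow_closed[OF sub g(1)] .
  ultimately show ?thesis
    unfolding subgroup_trlen_def using bound by (intro cInf_greatest) blast+
qed

lemma E_reduced_dist_le:
  assumes "E_reduced G act \<delta> E t x" "e \<in> E" "f \<in> E"
  shows "dist (act t x) x \<le> dist (act (e \<otimes> t \<otimes> f) x) x"
proof -
  have "(INF ef \<in> E \<times> E. dist (act (fst ef \<otimes> t \<otimes> snd ef) x) x) \<le> dist (act (fst (e, f) \<otimes> t \<otimes> snd (e, f)) x) x"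
    by (rule cINF_lower) (use assms(2,3) in \<open>auto intro: bdd_belowI[of _ 0]\<close>)
  then show ?thesis
    using assms(1) unfolding E_reduced_def by simp
qed

lemma E_reduced_nearest:
  assumes sub: "subgroup E G" and t: "t \<in> carrier G" and red: "E_reduced G act \<delta> E t x" and e: "e \<in> E"
  shows "dist (act t x) x \<le> dist (act e (act t x)) x"
    and "dist (act (inv t) x) x \<le> dist (act e (act (inv t) x)) x"
proof -
  have ec: "e \<in> carrier G" and ie: "inv e \<in> E" and one: "\<one> \<in> E"
    using subgroup.mem_carrier[OF sub e] subgroup.m_inv_closed[OF sub e] subgroup.one_closed[OF sub] .
  have iec: "inv e \<in> carrier G"
    using subgroup.mem_carrier[OF sub ie] .
  have "e \<otimes> t \<otimes> \<one> = e \<otimes> t"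
    using ec t by (simp add: group.is_monoid[OF group])
  then show "dist (act t x) x \<le> dist (act e (act t x)) x"
    using E_reduced_dist_le[OF red e one] act_mult[OF ec t] by simp
  have "\<one> \<otimes> t \<otimes> inv e = t \<otimes> inv e"
    using t by (simp add: group.is_monoid[OF group])
  then have "dist (act t x) x \<le> dist (act t (act (inv e) x)) x"
    using E_reduced_dist_le[OF red one ie] act_mult[OF t iec] by simp
  also have "\<dots> = dist (act (inv t) x) (act (inv e) x)"
    using dist_act_inv_left[OF t, of x "act (inv e) x"] by (simp add: dist_commute)
  also have "\<dots> = dist (act e (act (inv t) x)) x"
    using dist_act_left[OF ec, of "act (inv t) x" x] by simp
  finally show "dist (act (inv t) x) x \<le> dist (act e (act (inv t) x)) x"
    using displacement_inv[OF t] by simp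
qed

lemma nearest_gromov_le:
  assumes "subgroup E G" and nearest: "\<And>e. e \<in> E \<Longrightarrow> dist z x \<le> dist (act e z) x" and "g \<in> E"
  shows "2 * gromov x (act g x) z \<le> dist (act g x) x"
proof -
  have g: "g \<in> carrier G" "inv g \<in> E"
    using subgroup.mem_carrier[OF assms(1,3)] subgroup.m_inv_closed[OF assms(1,3)] .
  have "dist z x \<le> dist (act (inv g) z) x"
    using nearest[OF g(2)] .
  also have "\<dots> = dist z (act g x)"
    using dist_act_inv_left[OF g(1)] .
  finally show ?thesis
    using dist_eq_gromov[of "act g x" z x] dist_commute[of z "act g x"] by linarith
qed

lemma seq_equiv_act:
  assumes g: "g \<in> carrier G" and uw: "seq_equiv u w"
  shows "seq_equiv (\<lambda>n. act g (u n)) (\<lambda>n. act g (w n))"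
  unfolding seq_equiv_def
proof (intro allI)
  fix b M
  have eq: "gromov b (act g (u m)) (act g (w n)) = gromov (act (inv g) b) (u m) (w n)" for m n
    using gromov_act[OF g, of "act (inv g) b" "u m" "w n"] g by simp
  show "\<exists>N. \<forall>m\<ge>N. \<forall>n\<ge>N. M \<le> gromov b (act g (u m)) (act g (w n))"
    using uw[unfolded seq_equiv_def, THEN spec[of _ "act (inv g) b"], THEN spec[of _ M]] unfolding eq .
qed

lemma converges_at_infinity_act:
  "g \<in> carrier G \<Longrightarrow> converges_at_infinity u \<Longrightarrow> converges_at_infinity (\<lambda>n. act g (u n))"
  using seq_equiv_act[of g u u] seq_equiv_refl unfolding converges_at_infinity_def seq_equiv_def by blast

lemma orbit_gromov_eq:
  "f \<in> carrier G \<Longrightarrow> gromov (act (f [^] Suc i) q) (act (f [^] i) q) (act (f [^] Suc (Suc i)) q)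
    = gromov q (act (inv f) q) (act f q)"
  using gromov_act[of "f [^] Suc i" q "act (inv f) q" "act f q"] by (simp add: act_mult)

lemma orbit_dist_eq: "f \<in> carrier G \<Longrightarrow> dist (act (f [^] Suc i) q) (act (f [^] i) q) = dist (act f q) q"
  by (simp add: act_mult)

end

locale hyperbolic_group_action =
  isometric_group_action G act + delta_hyperbolic "TYPE('x)" \<delta>
  for G :: "('g, 'b) monoid_scheme" (structure) and act :: "'g \<Rightarrow> 'x::metric_space \<Rightarrow> 'x" and \<delta> :: real
begin

lemma limit_set_act:
  assumes sub: "subgroup E G" and f: "f \<in> E" and \<xi>: "\<xi> \<in> limit_set act E" and u: "u \<in> \<xi>"
  obtains \<zeta> where "\<zeta> \<in> limit_set act E" "\<And>w. w \<in> \<zeta> \<Longrightarrow> seq_equiv (\<lambda>n. act f (u n)) w"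
proof -
  have fc: "f \<in> carrier G"
    using subgroup.mem_carrier[OF sub f] .
  obtain h x where h: "\<And>n. h n \<in> E" and hx: "(\<lambda>n. act (h n) x) \<in> \<xi>"
    and \<xi>_boundary: "\<xi> \<in> gromov_boundary TYPE('x)"
    using \<xi> unfolding limit_set_def by blast
  define v where "v = (\<lambda>n. act (f \<otimes> h n) x)"
  have v: "v = (\<lambda>n. act f (act (h n) x))"
    unfolding v_def using act_mult[OF fc subgroup.mem_carrier[OF sub h]] by simp
  have conv: "converges_at_infinity v"
    unfolding v using converges_at_infinity_act[OF fc gromov_boundary_converges[OF \<xi>_boundary hx]] .
  have uv: "seq_equiv (\<lambda>n. act f (u n)) v"
    unfolding v using seq_equiv_act[OF fc seq_equiv_boundary[OF \<xi>_boundary u hx]] .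
  define \<zeta> where "\<zeta> = {w. converges_at_infinity w \<and> seq_equiv v w}"
  have "\<zeta> \<in> gromov_boundary TYPE('x)"
    unfolding gromov_boundary_def \<zeta>_def using conv by blast
  moreover have "v \<in> \<zeta>"
    unfolding \<zeta>_def using conv seq_equiv_refl by blast
  moreover have "f \<otimes> h n \<in> E" for n
    using subgroup.m_closed[OF sub f h] .
  ultimately have "\<zeta> \<in> limit_set act E"
    unfolding limit_set_def v_def by (intro CollectI conjI exI[of _ "\<lambda>n. f \<otimes> h n"] exI[of _ x]) auto
  moreover have "seq_equiv (\<lambda>n. act f (u n)) w" if "w \<in> \<zeta>" for w
    using seq_equiv_trans[OF uv] that unfolding \<zeta>_def by blast
  ultimately show ?thesis
    using that by blast
qed

text \<open>The midpoint of a geodesic from \<open>p\<close> to \<open>g p\<close> is moved by at most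
  \<open>|g\<^sup>2 p - p| + 2\<delta>\<close>.\<close>
lemma translation_length_le_square_displacement:
  assumes geo: "geodesic_space TYPE('x)" and g: "g \<in> carrier G"
  shows "translation_length act g \<le> dist (act g (act g p)) p + 2 * \<delta>"
proof -
  define \<tau> where "\<tau> = dist p (act g p)"
  obtain c :: "real \<Rightarrow> 'x" where c: "c 0 = p" "c \<tau> = act g p"
    and iso: "\<forall>s\<in>{0..\<tau>}. \<forall>t\<in>{0..\<tau>}. dist (c s) (c t) = \<bar>s - t\<bar>"
    using geo unfolding geodesic_space_def \<tau>_def by blast
  define m where "m = c (\<tau> / 2)"
  have "0 \<le> \<tau>"
    unfolding \<tau>_def by simp
  then have mp: "dist m p = \<tau> / 2" and mgp: "dist m (act g p) = \<tau> / 2"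
    using iso[rule_format, of "\<tau> / 2" 0] iso[rule_format, of "\<tau> / 2" \<tau>] unfolding m_def c by auto
  define \<eta> where "\<eta> = dist (act g (act g p)) p"
  have gm: "dist (act g m) (act g p) = \<tau> / 2"
    using g mp by simp
  have "dist p (act g m) \<le> \<eta> + \<tau> / 2"
    using dist_triangle[of p "act g m" "act g (act g p)"] g mgp unfolding \<eta>_def by (simp add: dist_commute)
  then have "\<tau> - \<eta> \<le> 2 * gromov (act g p) p (act g m)"
    using gromov_double[of "act g p" p "act g m"] gm unfolding \<tau>_def by (simp add: dist_commute)
  moreover have "2 * gromov (act g p) m p = \<tau>"
    using gromov_double[of "act g p" m p] mp mgp unfolding \<tau>_def by (simp add: dist_commute)
  moreover have "min (gromov (act g p) m p) (gromov (act g p) p (act g m)) - \<delta> \<le> gromov (act g p) m (act g m)"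
    by (rule gromov_min)
  moreover have "dist m (act g m) = dist m (act g p) + dist (act g m) (act g p) - 2 * gromov (act g p) m (act g m)"
    by (rule dist_eq_gromov)
  moreover have "0 \<le> \<eta>"
    unfolding \<eta>_def by simp
  ultimately have "dist (act g m) m \<le> \<eta> + 2 * \<delta>"
    using mgp gm by (simp add: dist_commute min_def split: if_splits)
  then show ?thesis
    using translation_length_le[of act g m] unfolding \<eta>_def by linarith
qed

context
  fixes f q c
  assumes f: "f \<in> carrier G" and c: "0 \<le> c" and turn: "gromov q (act (inv f) q) (act f q) \<le> c"
    and long: "2 * c + 3 * \<delta> < dist (act f q) q"
begin

lemma orbit_turn: "0 < (i::nat) \<Longrightarrow> gromov (act (f [^] i) q) (act (f [^] (i - 1)) q) (act (f [^] Suc i) q) \<le> c"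
  using orbit_gromov_eq[OF f, of "i - 1" q] turn by simp

lemma orbit_step: "0 < (i::nat) \<Longrightarrow> dist (act f q) q \<le> dist (act (f [^] i) q) (act (f [^] (i - 1)) q)"
  using orbit_dist_eq[OF f, of "i - 1" q] by simp

lemma orbit_dist_lower: "real k * (dist (act f q) q - 2 * c - 2 * \<delta>) \<le> dist (act (f [^] k) q) q"
proof -
  have "real k * (dist (act f q) q - 2 * c - 2 * \<delta>) \<le> dist (act (f [^] k) q) (act (f [^] (0::nat)) q)"
    by (rule chain_dist_start[where n = k, OF c long]) (use orbit_turn orbit_step in auto)
  then show ?thesis
    by simp
qed

lemma orbit_gromov_lower:
  fixes k :: nat
  assumes "1 \<le> k"
  shows "dist (act f q) q - c - 2 * \<delta> \<le> gromov q (act f q) (act (f [^] k) q)"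
proof (cases "k = 1")
  case True
  have "gromov q (act f q) (act (f [^] k) q) = dist (act f q) q"
    unfolding True act_pow_one[OF f] by (rule gromov_self)
  then show ?thesis
    using c delta_nonneg by linarith
next
  case False
  have "gromov (act (f [^] (1::nat)) q) (act (f [^] (0::nat)) q) (act (f [^] k) q) \<le> c + 2 * \<delta>"
    by (rule chain_gromov_start_end[where n = k, OF c long])
      (use orbit_turn orbit_step assms False in auto)
  then have "gromov (act f q) q (act (f [^] k) q) \<le> c + 2 * \<delta>"
    by (simp only: act_pow_one[OF f] nat_pow_0 act_one)
  then show ?thesis
    using gromov_add_gromov[of q "act f q" "act (f [^] k) q"] by linarith
qed

lemma orbit_displacement_le: "dist (act f q) q \<le> translation_length act f + 2 * c + 2 * \<delta>"
proof -
  have "dist (act f q) q - 2 * c - 2 * \<delta> \<le> translation_length act f"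
    by (rule translation_length_ge_of_growth[OF f, where x = q]) (use orbit_dist_lower in simp)
  then show ?thesis
    by linarith
qed

end

end

lemma first_escape_bound:
  fixes \<rho> :: "nat \<Rightarrow> real"
  assumes subadditive: "\<And>k. \<rho> (Suc k) \<le> \<rho> k + \<rho> 1"
    and \<kappa>: "0 < \<kappa>" and growth: "\<And>k. real k * \<kappa> - C \<le> \<rho> k"
    and B: "0 \<le> B" and step: "\<And>k. 1 \<le> k \<Longrightarrow> 2 * (min (\<rho> k) D - B) \<le> \<rho> k"
  shows "2 * D \<le> 4 * B + \<rho> 1"
proof -
  obtain n :: nat where n: "(2 * B + C) / \<kappa> < real n"
    using reals_Archimedean2 by blast
  define m where "m = Suc n"
  have m: "1 \<le> m" "(2 * B + C) / \<kappa> < real m"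
    unfolding m_def using n by simp_all
  then have "2 * B + C < real m * \<kappa>"
    using \<kappa> by (simp only: pos_divide_less_eq)
  then have "2 * B < \<rho> m"
    using growth[of m] by linarith
  then have escape: "\<exists>k. 1 \<le> k \<and> 2 * B < \<rho> k"
    using m(1) by blast
  define k where "k = (LEAST k. 1 \<le> k \<and> 2 * B < \<rho> k)"
  have k: "1 \<le> k \<and> 2 * B < \<rho> k"
    unfolding k_def by (rule LeastI_ex[OF escape])
  have "\<rho> k \<le> 2 * B + \<rho> 1"
  proof (cases "k = 1")
    case True
    then show ?thesis using B by simp
  next
    case False
    have "k - 1 < k"
      using k by simp
    then have "\<not> (1 \<le> k - 1 \<and> 2 * B < \<rho> (k - 1))"
      unfolding k_def by (rule not_less_Least[where P = "\<lambda>k. 1 \<le> k \<and> 2 * B < \<rho> k"])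
    moreover have "1 \<le> k - 1"
      using False k by auto
    moreover have "\<rho> k \<le> \<rho> (k - 1) + \<rho> 1"
      using subadditive[of "k - 1"] k by simp
    ultimately show ?thesis
      by linarith
  qed
  then show ?thesis
    using step[of k] k by (simp add: min_def split: if_splits)
qed

section \<open>The action near a quasi-axis\<close>

locale aligned_axis = hyperbolic_group_action G act \<delta>
  for G :: "('g, 'b) monoid_scheme" (structure) and act :: "'g \<Rightarrow> 'x::metric_space \<Rightarrow> 'x" and \<delta> :: real +
  fixes E :: "'g set" and \<gamma> :: "real \<Rightarrow> 'x" and K :: real
  assumes subgroup_E: "subgroup E G" and aligned: "aligned \<gamma> K" and K_nonneg: "0 \<le> K"
    and endpoints: "has_endpoints act E \<gamma>"
begin

lemma E_carrier: "e \<in> E \<Longrightarrow> e \<in> carrier G"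
  using subgroup.mem_carrier[OF subgroup_E] .

lemma E_inv: "e \<in> E \<Longrightarrow> inv e \<in> E"
  using subgroup.m_inv_closed[OF subgroup_E] .

lemma act_ray_seq_equiv:
  assumes f: "f \<in> E" and ray: "u = (\<lambda>n. \<gamma> (real n)) \<or> u = (\<lambda>n. \<gamma> (- real n))"
  shows "seq_equiv (\<lambda>n. act f (u n)) (\<lambda>n. \<gamma> (real n)) \<or> seq_equiv (\<lambda>n. act f (u n)) (\<lambda>n. \<gamma> (- real n))"
proof -
  obtain \<xi>p \<xi>m where P: "(\<lambda>n. \<gamma> (real n)) \<in> \<xi>p" and M: "(\<lambda>n. \<gamma> (- real n)) \<in> \<xi>m"
    and L: "{\<xi>p, \<xi>m} = limit_set act E"
    using endpoints unfolding has_endpoints_def by blast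
  obtain \<xi> where "\<xi> \<in> limit_set act E" "u \<in> \<xi>"
    using ray P M L by blast
  then obtain \<zeta> where \<zeta>: "\<zeta> \<in> limit_set act E" "\<And>w. w \<in> \<zeta> \<Longrightarrow> seq_equiv (\<lambda>n. act f (u n)) w"
    using limit_set_act[OF subgroup_E f] by blast
  then have "\<zeta> = \<xi>p \<or> \<zeta> = \<xi>m"
    using L by blast
  then show ?thesis
    using \<zeta>(2) P M by blast
qed

lemma act_rays_distinct_ends:
  assumes f: "f \<in> E" and "seq_equiv (\<lambda>n. act f (\<gamma> (real n))) Z" "seq_equiv (\<lambda>n. act f (\<gamma> (- real n))) Z"
  shows False
proof -
  have fc: "f \<in> carrier G"
    using E_carrier[OF f] .
  have "seq_equiv (\<lambda>n. act f (\<gamma> (real n))) (\<lambda>n. act f (\<gamma> (- real n)))"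
    using seq_equiv_trans[OF assms(2) seq_equiv_sym[OF assms(3)]] .
  from seq_equiv_act[OF group.inv_closed[OF group fc] this]
  have "seq_equiv (\<lambda>n. \<gamma> (real n)) (\<lambda>n. \<gamma> (- real n))"
    using fc by simp
  then show False
    using aligned_ends_not_seq_equiv[OF aligned] by blast
qed

text \<open>As \<open>f\<close> sends the two rays of \<open>\<gamma>\<close> to distinct ends, the point \<open>f (\<gamma> s)\<close>
  sees \<open>\<gamma> (- n)\<close> and \<open>\<gamma> n\<close> at a small Gromov product for some large \<open>n\<close>.\<close>
lemma elem_near_axis:
  assumes f: "f \<in> E"
  obtains r where "dist (act f (\<gamma> s)) (\<gamma> r) \<le> 3 * K + 4 * \<delta>"
proof -
  let ?P = "\<lambda>n::nat. \<gamma> (real n)" and ?M = "\<lambda>n::nat. \<gamma> (- real n)"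
  obtain Z1 where Z1: "Z1 = ?P \<or> Z1 = ?M" "seq_equiv (\<lambda>n. act f (?P n)) Z1"
    using act_ray_seq_equiv[OF f] by blast
  obtain Z2 where Z2: "Z2 = ?P \<or> Z2 = ?M" "seq_equiv (\<lambda>n. act f (?M n)) Z2"
    using act_ray_seq_equiv[OF f] by blast
  have "Z1 \<noteq> Z2"
    using act_rays_distinct_ends[OF f Z1(2)] Z2(2) by blast
  define p where "p = act f (\<gamma> s)"
  define N where "N = nat \<lceil>\<bar>s\<bar>\<rceil>"
  have close: "gromov p (act f (?M n)) (act f (?P n)) \<le> K" if "N \<le> n" for n
  proof -
    have "\<bar>s\<bar> \<le> real N"
      unfolding N_def by (rule real_nat_ceiling_ge)
    also have "\<dots> \<le> real n"
      using that by simp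
    finally have "- real n \<le> s" "s \<le> real n"
      by linarith+
    then show ?thesis
      unfolding p_def using aligned_gromov_le[OF aligned] E_carrier[OF f] by simp
  qed
  obtain n where "gromov p (Z2 n) (Z1 n) \<le> K + 2 * \<delta>"
    using gromov_le_of_seq_equiv[OF Z1(2) Z2(2) close] by blast
  then have "gromov p (?M n) (?P n) \<le> K + 2 * \<delta>"
    using Z1(1) Z2(1) \<open>Z1 \<noteq> Z2\<close> gromov_commute[of p "?M n" "?P n"] by auto
  moreover have "- real n \<le> real n"
    by simp
  ultimately obtain r where "dist p (\<gamma> r) \<le> K + 2 * \<delta> + 2 * K + 2 * \<delta>"
    using aligned_near_of_gromov_le[OF aligned K_nonneg] by blast
  then have "dist (act f (\<gamma> s)) (\<gamma> r) \<le> 3 * K + 4 * \<delta>"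
    unfolding p_def by linarith
  then show ?thesis
    by (rule that)
qed

text \<open>On the same side, \<open>e (\<gamma> s)\<close> and \<open>e\<inverse> (\<gamma> s)\<close> would be close to each other, so
  \<open>e\<^sup>2\<close> would almost fix \<open>\<gamma> s\<close>, contradicting \<open>translation_length_le_square_displacement\<close>.\<close>
lemma opposite_sides:
  assumes geo: "geodesic_space TYPE('x)" and e: "e \<in> E"
    and long: "20 * K + 26 * \<delta> < translation_length act e"
  obtains a b where "dist (act e (\<gamma> s)) (\<gamma> a) \<le> 3 * K + 4 * \<delta>"
    "dist (act (inv e) (\<gamma> s)) (\<gamma> b) \<le> 3 * K + 4 * \<delta>" "\<not> same_side s a b"
proof -
  obtain a where a: "dist (act e (\<gamma> s)) (\<gamma> a) \<le> 3 * K + 4 * \<delta>"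
    using elem_near_axis[OF e] by blast
  obtain b where b: "dist (act (inv e) (\<gamma> s)) (\<gamma> b) \<le> 3 * K + 4 * \<delta>"
    using elem_near_axis[OF E_inv[OF e]] by blast
  have "\<not> same_side s a b"
  proof
    assume side: "same_side s a b"
    have ec: "e \<in> carrier G"
      using E_carrier[OF e] .
    have "dist (act e (\<gamma> s)) (\<gamma> s) - (10 * K + 12 * \<delta>)
        \<le> gromov (\<gamma> s) (act e (\<gamma> s)) (act (inv e) (\<gamma> s))"
      using gromov_near_same_side[OF aligned side a b, of "\<gamma> s" 0] displacement_inv[OF ec]
      by (simp add: distrib_left)
    moreover have "dist (act e (act e (\<gamma> s))) (\<gamma> s) = dist (act e (\<gamma> s)) (act (inv e) (\<gamma> s))"
      using dist_act_left[OF ec] .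
    moreover have "dist (act e (\<gamma> s)) (act (inv e) (\<gamma> s))
        = 2 * dist (act e (\<gamma> s)) (\<gamma> s) - 2 * gromov (\<gamma> s) (act e (\<gamma> s)) (act (inv e) (\<gamma> s))"
      using dist_eq_gromov[of "act e (\<gamma> s)" "act (inv e) (\<gamma> s)" "\<gamma> s"] displacement_inv[OF ec] by simp
    moreover have "translation_length act e \<le> dist (act e (act e (\<gamma> s))) (\<gamma> s) + 2 * \<delta>"
      using translation_length_le_square_displacement[OF geo ec] .
    ultimately show False
      using long by linarith
  qed
  then show ?thesis
    using that a b by blast
qed

lemma exists_elem_toward:
  assumes geo: "geodesic_space TYPE('x)" and e: "e \<in> E"
    and long: "20 * K + 26 * \<delta> < translation_length act e"
  obtains f a where "f \<in> E" "translation_length act f = translation_length act e"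
    "dist (act f (\<gamma> s)) (\<gamma> a) \<le> 3 * K + 4 * \<delta>" "same_side s a c"
    "gromov (\<gamma> s) (act (inv f) (\<gamma> s)) (act f (\<gamma> s)) \<le> 7 * K + 8 * \<delta>"
proof -
  obtain a b where a: "dist (act e (\<gamma> s)) (\<gamma> a) \<le> 3 * K + 4 * \<delta>"
    and b: "dist (act (inv e) (\<gamma> s)) (\<gamma> b) \<le> 3 * K + 4 * \<delta>" and opposite: "\<not> same_side s a b"
    using opposite_sides[OF geo e long] by blast
  have ec: "e \<in> carrier G"
    using E_carrier[OF e] .
  have "(b \<le> s \<and> s \<le> a) \<or> (a \<le> s \<and> s \<le> b)"
    using opposite unfolding same_side_def by auto
  then have turn: "gromov (\<gamma> s) (act (inv e) (\<gamma> s)) (act e (\<gamma> s)) \<le> 7 * K + 8 * \<delta>"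
    using gromov_near_between[OF aligned _ b a] by simp
  show ?thesis
  proof (cases "same_side s a c")
    case True
    show ?thesis
      by (rule that[OF e refl a True turn])
  next
    case False
    then have "same_side s b c"
      using opposite unfolding same_side_def by auto
    moreover have "gromov (\<gamma> s) (act (inv (inv e)) (\<gamma> s)) (act (inv e) (\<gamma> s)) \<le> 7 * K + 8 * \<delta>"
      using turn gromov_commute[of "\<gamma> s" "act (inv e) (\<gamma> s)"] group.inv_inv[OF group ec] by simp
    ultimately show ?thesis
      using that[OF E_inv[OF e] translation_length_inv[OF ec] b] by blast
  qed
qed

text \<open>As \<open>f\<close> pushes \<open>\<gamma> s\<close> towards the side of \<open>v (\<gamma> s)\<close>, the points \<open>f\<^sup>k x\<close> and
  \<open>v x\<close> leave \<open>x\<close> in the same direction, while \<open>z\<close> is not closer to \<open>f\<^sup>k x\<close> than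
  to \<open>x\<close>.\<close>
lemma nearest_orbit_step:
  fixes k :: nat
  assumes x: "dist x (\<gamma> s) \<le> 40 * \<delta>"
    and nearest: "\<And>e. e \<in> E \<Longrightarrow> dist z x \<le> dist (act e z) x"
    and v: "v \<in> E" "dist (act v (\<gamma> s)) (\<gamma> c) \<le> 3 * K + 4 * \<delta>"
    and f: "f \<in> E" "dist (act f (\<gamma> s)) (\<gamma> a) \<le> 3 * K + 4 * \<delta>" "same_side s a c"
    and ahead: "7 * K + 8 * \<delta> < gromov (\<gamma> s) (act f (\<gamma> s)) (act (f [^] k) (\<gamma> s))"
  shows "2 * (min (dist (act (f [^] k) x) x) (gromov x z (act v x)) - (10 * K + 213 * \<delta>))
    \<le> dist (act (f [^] k) x) x"
proof -
  have fk: "f [^] k \<in> E"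
    using subgroup_nat_pow_closed[OF subgroup_E f(1)] .
  obtain b where b: "dist (act (f [^] k) (\<gamma> s)) (\<gamma> b) \<le> 3 * K + 4 * \<delta>"
    using elem_near_axis[OF fk] by blast
  have "same_side s b c"
  proof (rule ccontr)
    assume "\<not> same_side s b c"
    then have "(a \<le> s \<and> s \<le> b) \<or> (b \<le> s \<and> s \<le> a)"
      using f(3) unfolding same_side_def by auto
    then have "gromov (\<gamma> s) (act f (\<gamma> s)) (act (f [^] k) (\<gamma> s)) \<le> K + 2 * (3 * K + 4 * \<delta>)"
      by (rule gromov_near_between[OF aligned _ f(2) b])
    then show False
      using ahead by (simp add: distrib_left)
  qed
  define R where "R = 3 * K + 44 * \<delta>"
  have "dist (act (f [^] k) x) (\<gamma> b) \<le> R" "dist (act v x) (\<gamma> c) \<le> R"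
    using dist_act_le[OF E_carrier[OF fk], of x "\<gamma> b" "\<gamma> s"] dist_act_le[OF E_carrier[OF v(1)], of x "\<gamma> c" "\<gamma> s"]
      x b v(2) unfolding R_def by linarith+
  then have "min (dist (act (f [^] k) x) x) (dist (act v x) x) - (K + 3 * R + 2 * (40 * \<delta>))
      \<le> gromov x (act (f [^] k) x) (act v x)"
    by (rule gromov_near_same_side[OF aligned \<open>same_side s b c\<close> _ _ x])
  moreover have "min (gromov x (act (f [^] k) x) (act v x)) (gromov x (act v x) z) - \<delta>
      \<le> gromov x (act (f [^] k) x) z"
    by (rule gromov_min)
  moreover have "2 * gromov x (act (f [^] k) x) z \<le> dist (act (f [^] k) x) x"
    using nearest_gromov_le[OF subgroup_E nearest fk] .
  moreover have "gromov x z (act v x) \<le> dist (act v x) x"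
    by (rule gromov_le_dist_right)
  ultimately show ?thesis
    using gromov_commute[of x z "act v x"] K_nonneg delta_nonneg unfolding R_def
    by (simp add: min_def split: if_splits)
qed

text \<open>The orbit distances \<open>|f\<^sup>k x - x|\<close> grow linearly, and \<open>nearest_orbit_step\<close> at
  the first \<open>k\<close> for which they are large bounds the Gromov product by about
  \<open>|f x - x| / 2\<close>.\<close>
lemma gromov_nearest_le_displacement:
  assumes x: "dist x (\<gamma> s) \<le> 40 * \<delta>"
    and nearest: "\<And>e. e \<in> E \<Longrightarrow> dist z x \<le> dist (act e z) x"
    and v: "v \<in> E" "dist (act v (\<gamma> s)) (\<gamma> c) \<le> 3 * K + 4 * \<delta>"
    and f: "f \<in> E" "dist (act f (\<gamma> s)) (\<gamma> a) \<le> 3 * K + 4 * \<delta>" "same_side s a c"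
    and turn: "gromov (\<gamma> s) (act (inv f) (\<gamma> s)) (act f (\<gamma> s)) \<le> 7 * K + 8 * \<delta>"
    and long: "14 * K + 19 * \<delta> < dist (act f (\<gamma> s)) (\<gamma> s)"
  shows "2 * gromov x z (act v x) \<le> dist (act f (\<gamma> s)) (\<gamma> s) + 40 * K + 932 * \<delta>"
proof -
  define c where "c = 7 * K + 8 * \<delta>"
  define B where "B = 10 * K + 213 * \<delta>"
  have fc: "f \<in> carrier G"
    using E_carrier[OF f(1)] .
  have turn_c: "gromov (\<gamma> s) (act (inv f) (\<gamma> s)) (act f (\<gamma> s)) \<le> c"
    using turn c_def by simp
  have long_c: "2 * c + 3 * \<delta> < dist (act f (\<gamma> s)) (\<gamma> s)" and c0: "0 \<le> c"
    using long K_nonneg delta_nonneg c_def by linarith+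
  define \<rho> where "\<rho> k = dist (act (f [^] k) x) x" for k :: nat
  have "2 * gromov x z (act v x) \<le> 4 * B + \<rho> 1"
  proof (rule first_escape_bound[where \<kappa> = "dist (act f (\<gamma> s)) (\<gamma> s) - 2 * c - 2 * \<delta>" and C = "80 * \<delta>"])
    show "\<rho> (Suc k) \<le> \<rho> k + \<rho> 1" for k
      unfolding \<rho>_def act_pow_one[OF fc] by (rule displacement_pow_Suc_le[OF fc])
    show "0 < dist (act f (\<gamma> s)) (\<gamma> s) - 2 * c - 2 * \<delta>"
      using long_c delta_nonneg by linarith
    show "real k * (dist (act f (\<gamma> s)) (\<gamma> s) - 2 * c - 2 * \<delta>) - 80 * \<delta> \<le> \<rho> k" for k
      using orbit_dist_lower[OF fc c0 turn_c long_c, of k] displacement_le[OF pow_closed[OF fc, of k], of "\<gamma> s" x]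
        x dist_commute[of x "\<gamma> s"] unfolding \<rho>_def by linarith
    show "0 \<le> B"
      using K_nonneg delta_nonneg B_def by linarith
    show "2 * (min (\<rho> k) (gromov x z (act v x)) - B) \<le> \<rho> k" if "1 \<le> k" for k
    proof -
      have "7 * K + 8 * \<delta> < gromov (\<gamma> s) (act f (\<gamma> s)) (act (f [^] k) (\<gamma> s))"
        using orbit_gromov_lower[OF fc c0 turn_c long_c that] long_c delta_nonneg c_def by linarith
      from nearest_orbit_step[OF x nearest v f this]
      show ?thesis
        unfolding \<rho>_def B_def .
    qed
  qed
  moreover have "\<rho> 1 \<le> dist (act f (\<gamma> s)) (\<gamma> s) + 80 * \<delta>"
    unfolding \<rho>_def act_pow_one[OF fc] using displacement_le[OF fc, of x "\<gamma> s"] x by linarith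
  ultimately show ?thesis
    using B_def by linarith
qed

lemma gromov_nearest_le_translation_length:
  assumes geo: "geodesic_space TYPE('x)" and K: "K \<le> 5/2 * \<delta>" and x: "dist x (\<gamma> s) \<le> 40 * \<delta>"
    and nearest: "\<And>e. e \<in> E \<Longrightarrow> dist z x \<le> dist (act e z) x" and v: "v \<in> E"
    and e: "e \<in> E" "200 * \<delta> < translation_length act e"
  shows "2 * gromov x z (act v x) \<le> translation_length act e + 1100 * \<delta>"
proof -
  obtain c where c: "dist (act v (\<gamma> s)) (\<gamma> c) \<le> 3 * K + 4 * \<delta>"
    using elem_near_axis[OF v] by blast
  have "20 * K + 26 * \<delta> < translation_length act e"
    using e(2) K delta_nonneg by linarith
  then obtain f a where f: "f \<in> E" "translation_length act f = translation_length act e"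
      "dist (act f (\<gamma> s)) (\<gamma> a) \<le> 3 * K + 4 * \<delta>" "same_side s a c"
    and turn: "gromov (\<gamma> s) (act (inv f) (\<gamma> s)) (act f (\<gamma> s)) \<le> 7 * K + 8 * \<delta>"
    using exists_elem_toward[OF geo e(1), of s c] by blast
  have fc: "f \<in> carrier G"
    using E_carrier[OF f(1)] .
  have long: "14 * K + 19 * \<delta> < dist (act f (\<gamma> s)) (\<gamma> s)"
    using translation_length_le[of act f "\<gamma> s"] f(2) e(2) K delta_nonneg by linarith
  have "0 \<le> 7 * K + 8 * \<delta>" "2 * (7 * K + 8 * \<delta>) + 3 * \<delta> < dist (act f (\<gamma> s)) (\<gamma> s)"
    using long K_nonneg delta_nonneg by (simp_all add: distrib_left)
  from orbit_displacement_le[OF fc this(1) turn this(2)]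
  have "dist (act f (\<gamma> s)) (\<gamma> s) \<le> translation_length act f + 14 * K + 18 * \<delta>"
    by (simp add: distrib_left)
  then show ?thesis
    using gromov_nearest_le_displacement[OF x nearest v c f(1,3,4) turn long] f(2) K delta_nonneg
    by linarith
qed

lemma gromov_nearest_le_subgroup_trlen:
  assumes geo: "geodesic_space TYPE('x)" and lox: "loxodromic G act E" and K: "K \<le> 5/2 * \<delta>"
    and x: "dist x (\<gamma> s) \<le> 40 * \<delta>" and nearest: "\<And>e. e \<in> E \<Longrightarrow> dist z x \<le> dist (act e z) x"
    and v: "v \<in> E"
  shows "gromov x z (act v x) \<le> subgroup_trlen act \<delta> E / 2 + 1500 * \<delta>"
proof -
  have "2 * gromov x z (act v x) - 1100 * \<delta> \<le> subgroup_trlen act \<delta> E"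
  proof (rule le_subgroup_trlen[OF lox])
    fix e
    assume "e \<in> E" "200 * \<delta> < translation_length act e"
    then show "2 * gromov x z (act v x) - 1100 * \<delta> \<le> translation_length act e"
      using gromov_nearest_le_translation_length[OF geo K x nearest v] by fastforce
  qed
  then show ?thesis
    using delta_nonneg by linarith
qed

end

theorem lemma3p5:
  fixes G :: "('g, 'b) monoid_scheme" and act :: "'g \<Rightarrow> 'x::metric_space \<Rightarrow> 'x"
    and \<delta> \<kappa>\<^sub>0 \<rho>\<^sub>0 :: real and N\<^sub>0 :: nat
    and E :: "'g set" and x\<^sub>0 :: 'x and t v :: 'g
  assumes "standing_assumptions G act \<delta> \<kappa>\<^sub>0 \<rho>\<^sub>0 N\<^sub>0"
    and "max_loxodromic G act E"
    and "x\<^sub>0 \<in> C_set act \<delta> E"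
    and "t \<in> carrier G"
    and "E_reduced G act \<delta> E t x\<^sub>0"
    and "v \<in> E"
  shows "gromov x\<^sub>0 (act t x\<^sub>0) (act v x\<^sub>0) \<le> subgroup_trlen act \<delta> E / 2 + 1500 * \<delta> \<and>
         gromov x\<^sub>0 (act (inv\<^bsub>G\<^esub> t) x\<^sub>0) (act v x\<^sub>0) \<le> subgroup_trlen act \<delta> E / 2 + 1500 * \<delta>"
proof -
  have geo: "geodesic_space TYPE('x)" and "hyperbolic_space TYPE('x) \<delta>" "isometric_action G act"
    using assms(1) unfolding standing_assumptions_def by blast+
  then interpret hyperbolic_group_action G act \<delta>
    by unfold_locales
  have lox: "loxodromic G act E" and sub: "subgroup E G"
    using assms(2) unfolding max_loxodromic_def loxodromic_def elementary_def by blast+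
  obtain \<gamma> K s where "aligned \<gamma> K" "0 \<le> K" and K: "K \<le> 5/2 * \<delta>" and "has_endpoints act E \<gamma>"
    and x\<^sub>0: "dist x\<^sub>0 (\<gamma> s) \<le> 40 * \<delta>"
    using C_set_aligned_path[OF assms(3)] by blast
  then interpret aligned_axis G act \<delta> E \<gamma> K
    using sub by (intro aligned_axis.intro aligned_axis_axioms.intro hyperbolic_group_action_axioms)
  show ?thesis
    using gromov_nearest_le_subgroup_trlen[OF geo lox K x\<^sub>0 E_reduced_nearest(1)[OF sub assms(4,5)] assms(6)]
      gromov_nearest_le_subgroup_trlen[OF geo lox K x\<^sub>0 E_reduced_nearest(2)[OF sub assms(4,5)] assms(6)]
    by blast
qed

end
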